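(* The form $(-,-)_R$ induces a $\mathbb Q$-bilinear form $(-,-)_{R,0}$ on $L(\infty)/v^{-1}L(\infty)$, $(x+v^{-1}L(\infty),y+v^{-1}L(\infty))_{R,0}=(x,y)_R+v^{-1}A$, and for all $x,y\in L(\infty)$ one has $(x,y)_{R,0}=(x,y)_{K,0}$.
   Context: $U^+$ is the positive part of the quantum group of a Cartan datum $(I,(-,-))$ over $\mathbb Q(v)$, generated by $E_i$; $v_i=v^{(i,i)/2}$, $a_{ij}=2(i,j)/(i,i)$; $f_i'(1)=0$, $f_i'(E_j)=\delta_{ij}$, $f_i'(E_jP)=v_i^{a_{ij}}E_jf_i'(P)+\delta_{ij}P$. $A=\mathbb Q[[v^{-1}]]\cap\mathbb Q(v)$. Kashiwara's pairing $(-,-)_K$: unique non-degenerate symmetric bilinear form with $(1,1)_K=1$, $(E_ix,y)_K=(x,f_i'(y))_K$; it satisfies $(L(\infty),L(\infty))_K\subseteq A$ and induces $(x,y)_{K,0}=(x,y)_K+v^{-1}A$ on $L(\infty)/v^{-1}L(\infty)$. Ringel's pairing $(-,-)_R$ on $U^+$ is induced (via the Ringel–Green identification of $U^+$ with the generic composition algebra of Hall algebras) by $(\langle u_\beta\rangle,\langle u_{\beta'}\rangle)_R=v^{(\beta,\beta)}|\mathrm{Aut}(V_\beta)|^{-1}\delta_{\beta\beta'}$, and satisfies $(1,1)_R=1$, $(E_ix,y)_R=(1-v_i^{-2})^{-1}(x,f_i'(y))_R$. $L(\infty)$ is the $A$-span of all $\tilde E_{i_1}\cdots\tilde E_{i_l}1$,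 with Kashiwara operators $\tilde E_i(E_i^{(n)}u)=E_i^{(n+1)}u$ for $u\in\ker f_i'$. *)

theory Defs
  imports Main "HOL-Computational_Algebra.Polynomial" "HOL-Computational_Algebra.Fraction_Field"
begin

type_synonym Qv = "rat poly fract"

definition vv :: Qv where "vv = Fract [:0, 1:] 1"

text \<open>A = Q[[v^-1]] \<inter> Q(v): rational functions regular at v = infinity.\<close>
definition Aring :: "Qv set" where
  "Aring = {f. \<exists>p q. q \<noteq> 0 \<and> f = Fract p q \<and> degree p \<le> degree q}"

definition vinvA :: "Qv set" where
  "vinvA = (\<lambda>a. inverse vv * a) ` Aring"

text \<open>Cartan datum: symmetric bilinear form on Z[I] given on the basis I (a finite type).\<close>
definition cartan_datum :: "('i::finite \<Rightarrow> 'i \<Rightarrow> int) \<Rightarrow> bool" where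
  "cartan_datum cd \<longleftrightarrow> (\<forall>i j. cd i j = cd j i) \<and> (\<forall>i. cd i i > 0 \<and> even (cd i i))
     \<and> (\<forall>i j. i \<noteq> j \<longrightarrow> cd i i dvd 2 * cd i j \<and> cd i j \<le> 0)"

definition vi :: "('i \<Rightarrow> 'i \<Rightarrow> int) \<Rightarrow> 'i \<Rightarrow> Qv" where
  "vi cd i = vv ^ nat (cd i i div 2)"

definition aij :: "('i \<Rightarrow> 'i \<Rightarrow> int) \<Rightarrow> 'i \<Rightarrow> 'i \<Rightarrow> int" where
  "aij cd i j = (2 * cd i j) div cd i i"

definition qint :: "('i \<Rightarrow> 'i \<Rightarrow> int) \<Rightarrow> 'i \<Rightarrow> nat \<Rightarrow> Qv" where
  "qint cd i n = (vi cd i ^ n - inverse (vi cd i) ^ n) / (vi cd i - inverse (vi cd i))"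

definition qfact :: "('i \<Rightarrow> 'i \<Rightarrow> int) \<Rightarrow> 'i \<Rightarrow> nat \<Rightarrow> Qv" where
  "qfact cd i n = (\<Prod>k\<in>{1..n}. qint cd i k)"

definition Ediv :: "('i \<Rightarrow> 'i \<Rightarrow> int) \<Rightarrow> ('i \<Rightarrow> 'u::ring_1) \<Rightarrow> (Qv \<Rightarrow> 'u \<Rightarrow> 'u) \<Rightarrow> 'i \<Rightarrow> nat \<Rightarrow> 'u" where
  "Ediv cd E sc i n = sc (inverse (qfact cd i n)) (E i ^ n)"

inductive_set gen_by :: "('i \<Rightarrow> 'u::ring_1) \<Rightarrow> (Qv \<Rightarrow> 'u \<Rightarrow> 'u) \<Rightarrow> 'u set"
  for E sc where
  one: "1 \<in> gen_by E sc"
| mulE: "x \<in> gen_by E sc \<Longrightarrow> E i * x \<in> gen_by E sc"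
| add: "x \<in> gen_by E sc \<Longrightarrow> y \<in> gen_by E sc \<Longrightarrow> x + y \<in> gen_by E sc"
| scale: "x \<in> gen_by E sc \<Longrightarrow> sc a x \<in> gen_by E sc"

definition sym_bilin :: "(Qv \<Rightarrow> 'u::ab_group_add \<Rightarrow> 'u) \<Rightarrow> ('u \<Rightarrow> 'u \<Rightarrow> Qv) \<Rightarrow> bool" where
  "sym_bilin sc B \<longleftrightarrow> (\<forall>x y z. B (x + y) z = B x z + B y z) \<and> (\<forall>a x z. B (sc a x) z = a * B x z)
     \<and> (\<forall>x y. B x y = B y x)"

definition kashE :: "('i \<Rightarrow> 'i \<Rightarrow> int) \<Rightarrow> ('i \<Rightarrow> 'u::ring_1) \<Rightarrow> (Qv \<Rightarrow> 'u \<Rightarrow> 'u) \<Rightarrow> ('i \<Rightarrow> 'u \<Rightarrow> 'u)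
     \<Rightarrow> 'i \<Rightarrow> 'u \<Rightarrow> 'u" where
  "kashE cd E sc fp i u = (THE w. \<exists>(N::nat) c. (\<forall>n<N. fp i (c n) = 0)
       \<and> u = (\<Sum>n<N. Ediv cd E sc i n * c n) \<and> w = (\<Sum>n<N. Ediv cd E sc i (Suc n) * c n))"

inductive_set kmon :: "('i \<Rightarrow> 'i \<Rightarrow> int) \<Rightarrow> ('i \<Rightarrow> 'u::ring_1) \<Rightarrow> (Qv \<Rightarrow> 'u \<Rightarrow> 'u) \<Rightarrow> ('i \<Rightarrow> 'u \<Rightarrow> 'u) \<Rightarrow> 'u set"
  for cd E sc fp where
  one: "1 \<in> kmon cd E sc fp"
| step: "m \<in> kmon cd E sc fp \<Longrightarrow> kashE cd E sc fp i m \<in> kmon cd E sc fp"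

inductive_set Linf :: "('i \<Rightarrow> 'i \<Rightarrow> int) \<Rightarrow> ('i \<Rightarrow> 'u::ring_1) \<Rightarrow> (Qv \<Rightarrow> 'u \<Rightarrow> 'u) \<Rightarrow> ('i \<Rightarrow> 'u \<Rightarrow> 'u) \<Rightarrow> 'u set"
  for cd E sc fp where
  zero: "0 \<in> Linf cd E sc fp"
| add: "x \<in> Linf cd E sc fp \<Longrightarrow> y \<in> Linf cd E sc fp \<Longrightarrow> x + y \<in> Linf cd E sc fp"
| smul: "a \<in> Aring \<Longrightarrow> m \<in> kmon cd E sc fp \<Longrightarrow> sc a m \<in> Linf cd E sc fp"

definition vinvL :: "('i \<Rightarrow> 'i \<Rightarrow> int) \<Rightarrow> ('i \<Rightarrow> 'u::ring_1) \<Rightarrow> (Qv \<Rightarrow> 'u \<Rightarrow> 'u) \<Rightarrow> ('i \<Rightarrow> 'u \<Rightarrow> 'u) \<Rightarrow> 'u set" where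
  "vinvL cd E sc fp = sc (inverse vv) ` Linf cd E sc fp"

end

theory Submission
  imports Defs
begin

(*
  Ringel's form R and Kashiwara's form K on U^+ satisfy the same recursion
  (E_i x, y) = c * (x, f_i' y) with c = 1 for K and c = c_i = (1 - v_i^-2)^-1 for R,
  and R(1,1) = K(1,1) = 1.  Consequently, for x homogeneous of weight mu in N[I],
  R x y = c_mu * K x y with c_mu = prod_i c_i ^ mu_i.  Every c_i lies in 1 + v^-1 A,
  hence so does c_mu, and therefore R x y - K x y lies in v^-1 A whenever K x y lies in A.
  Since L(infinity) is the A-span of the Kashiwara monomials E~_i1 ... E~_il 1, it suffices
  to know that these monomials are homogeneous: each E~_i raises the weight by i.  This needs
  the decomposition u = sum_n E_i^(n) u_n with f_i' u_n = 0 to exist inside a weight space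
  (f_i' lowers the weight, so it is locally nilpotent) and to be unique (so that E~_i u is
  the explicit sum sum_n E_i^(n+1) u_n).
*)

section \<open>The valuation ring A and its ideal v^-1 A\<close>

lemma Aring_zero: "0 \<in> Aring"
  unfolding Aring_def by (intro CollectI exI[of _ 0] exI[of _ 1]) (simp add: Zero_fract_def)

lemma Aring_one: "1 \<in> Aring"
  unfolding Aring_def by (intro CollectI exI[of _ 1] exI[of _ 1]) (simp add: One_fract_def)

lemma Aring_add:
  assumes "a \<in> Aring" "b \<in> Aring" shows "a + b \<in> Aring"
proof -
  obtain p q where pq: "q \<noteq> 0" "a = Fract p q" "degree p \<le> degree q"
    using assms(1) unfolding Aring_def by blast
  obtain p' q' where pq': "q' \<noteq> 0" "b = Fract p' q'" "degree p' \<le> degree q'"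
    using assms(2) unfolding Aring_def by blast
  have "degree (p * q') \<le> degree (q * q')" "degree (p' * q) \<le> degree (q * q')"
    using degree_mult_le[of p q'] degree_mult_le[of p' q] degree_mult_eq[of q q'] pq pq' by simp_all
  then have "degree (p * q' + p' * q) \<le> degree (q * q')"
    using degree_add_le_max[of "p * q'" "p' * q"] by linarith
  then show ?thesis
    unfolding Aring_def using pq pq' by (intro CollectI exI[of _ "p * q' + p' * q"] exI[of _ "q * q'"]) simp
qed

lemma Aring_mult:
  assumes "a \<in> Aring" "b \<in> Aring" shows "a * b \<in> Aring"
proof -
  obtain p q where pq: "q \<noteq> 0" "a = Fract p q" "degree p \<le> degree q"
    using assms(1) unfolding Aring_def by blast
  obtain p' q' where pq': "q' \<noteq> 0" "b = Fract p' q'" "degree p' \<le> degree q'"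
    using assms(2) unfolding Aring_def by blast
  have "degree (p * p') \<le> degree (q * q')"
    using degree_mult_le[of p p'] degree_mult_eq[of q q'] pq pq' by simp
  then show ?thesis
    unfolding Aring_def using pq pq' by (intro CollectI exI[of _ "p * p'"] exI[of _ "q * q'"]) simp
qed

lemma vv_nonzero: "vv \<noteq> 0"
  unfolding vv_def by (simp add: Zero_fract_def eq_fract)

lemma vv_power: "vv ^ m = Fract (monom 1 m) 1"
proof (induction m)
  case 0 then show ?case by (simp add: One_fract_def monom_0 one_pCons)
next
  case (Suc m) then show ?case by (simp add: vv_def monom_Suc)
qed

lemma vv_power_neq_1: "0 < m \<Longrightarrow> vv ^ m \<noteq> 1"
  unfolding vv_power One_fract_def by (simp add: eq_fract) (metis degree_1 degree_monom_eq one_neq_zero not_gr0)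

lemma vinvA_iff: "x \<in> vinvA \<longleftrightarrow> vv * x \<in> Aring"
proof
  assume "x \<in> vinvA"
  then obtain a where "a \<in> Aring" "x = inverse vv * a" unfolding vinvA_def by blast
  then show "vv * x \<in> Aring" using vv_nonzero by (simp add: mult.assoc[symmetric])
next
  assume "vv * x \<in> Aring"
  then show "x \<in> vinvA" unfolding vinvA_def
    using vv_nonzero by (intro image_eqI[of _ _ "vv * x"]) (simp_all add: field_simps)
qed

lemma inverse_vv_in_Aring: "inverse vv \<in> Aring"
  unfolding Aring_def vv_def by (intro CollectI exI[of _ 1] exI[of _ "[:0, 1:]"]) simp

lemma vinvA_subset_Aring: "x \<in> vinvA \<Longrightarrow> x \<in> Aring"
  unfolding vinvA_def using Aring_mult[OF inverse_vv_in_Aring] by blast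

lemma vinvA_zero: "0 \<in> vinvA"
  using vinvA_iff Aring_zero by simp

lemma vinvA_add: "x \<in> vinvA \<Longrightarrow> y \<in> vinvA \<Longrightarrow> x + y \<in> vinvA"
  using vinvA_iff Aring_add by (simp add: distrib_left)

lemma vinvA_mult_Aring: "x \<in> vinvA \<Longrightarrow> a \<in> Aring \<Longrightarrow> x * a \<in> vinvA"
  using vinvA_iff Aring_mult by (metis mult.assoc)

lemma inverse_vv_mult_Aring: "a \<in> Aring \<Longrightarrow> inverse vv * a \<in> vinvA"
  unfolding vinvA_def by blast

lemma one_vinvA_mult:
  assumes "x - 1 \<in> vinvA" "y - 1 \<in> vinvA" shows "x * y - 1 \<in> vinvA"
proof -
  have "x * y - 1 = (x - 1) * (y - 1) + (x - 1) + (y - 1)" by (simp add: algebra_simps)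
  then show ?thesis using assms vinvA_mult_Aring vinvA_add vinvA_subset_Aring by metis
qed

lemma one_vinvA_power: "x - 1 \<in> vinvA \<Longrightarrow> x ^ n - 1 \<in> vinvA"
  by (induction n) (auto simp: vinvA_zero intro: one_vinvA_mult)

lemma one_vinvA_prod: "finite S \<Longrightarrow> (\<And>j. j \<in> S \<Longrightarrow> f j - 1 \<in> vinvA) \<Longrightarrow> prod f S - 1 \<in> vinvA"
  by (induction S rule: finite_induct) (auto simp: vinvA_zero intro: one_vinvA_mult)

lemma inverse_vv_power_minus_1: 
  assumes "0 < m" shows "inverse (vv ^ m - 1) \<in> vinvA"
proof -
  have nz: "monom (1::rat) m - 1 \<noteq> 0"
    using vv_power_neq_1[OF assms] by (auto simp: vv_power One_fract_def)
  have "degree (monom (1::rat) m - 1) = m"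
    using assms degree_add_eq_left[of "-1" "monom (1::rat) m"] by (simp add: degree_monom_eq)
  then have "Fract [:0, 1:] (monom 1 m - 1) \<in> Aring"
    unfolding Aring_def using nz assms by (intro CollectI exI[of _ "[:0, 1:]"] exI[of _ "monom 1 m - 1"]) simp
  moreover have "vv * inverse (vv ^ m - 1) = Fract [:0, 1:] (monom 1 m - 1)"
    unfolding vv_power by (simp add: vv_def One_fract_def)
  ultimately show ?thesis unfolding vinvA_iff by simp
qed


section \<open>Weight spaces of U^+\<close>

text \<open>Weights are functions I -> Z; \<open>shift \<mu> i k\<close> adds k times the simple root i.\<close>
definition shift :: "('i \<Rightarrow> int) \<Rightarrow> 'i \<Rightarrow> int \<Rightarrow> 'i \<Rightarrow> int" where
  "shift \<mu> i k = \<mu>(i := \<mu> i + k)"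

lemma shift_shift [simp]: "shift (shift \<mu> i a) i b = shift \<mu> i (a + b)"
  by (simp add: shift_def fun_eq_iff)

lemma shift_zero [simp]: "shift \<mu> i 0 = \<mu>"
  by (simp add: shift_def)

lemma shift_apply: "shift \<mu> i k j = (if j = i then \<mu> i + k else \<mu> j)"
  by (simp add: shift_def)

text \<open>\<open>weight_elem E sc \<mu> x\<close>: x lies in the weight space U^+_\<mu>, the span of the
  monomials E_i1 ... E_il with exactly \<mu> i factors E_i for every i.\<close>
inductive weight_elem :: "('i \<Rightarrow> 'u::ring_1) \<Rightarrow> (Qv \<Rightarrow> 'u \<Rightarrow> 'u) \<Rightarrow> ('i \<Rightarrow> int) \<Rightarrow> 'u \<Rightarrow> bool"
  for E sc where
  zero: "weight_elem E sc \<mu> 0"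
| one: "weight_elem E sc (\<lambda>_. 0) 1"
| mulE: "weight_elem E sc \<mu> x \<Longrightarrow> weight_elem E sc (shift \<mu> i 1) (E i * x)"
| add: "weight_elem E sc \<mu> x \<Longrightarrow> weight_elem E sc \<mu> y \<Longrightarrow> weight_elem E sc \<mu> (x + y)"
| scale: "weight_elem E sc \<mu> x \<Longrightarrow> weight_elem E sc \<mu> (sc a x)"

lemma weight_elem_sum:
  "(\<And>n. n < (N::nat) \<Longrightarrow> weight_elem E sc \<mu> (f n)) \<Longrightarrow> weight_elem E sc \<mu> (\<Sum>n<N. f n)"
  by (induction N) (auto intro: weight_elem.intros)

lemma weight_elem_Epower:
  "weight_elem E sc \<mu> x \<Longrightarrow> weight_elem E sc (shift \<mu> i (int k)) (E i ^ k * x)"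
proof (induction k)
  case (Suc k)
  from weight_elem.mulE[OF Suc.IH[OF Suc.prems], of i] show ?case
    by (simp add: mult.assoc add.commute)
qed simp

lemma geometric_sum_step: "(w::'a::comm_semiring_1) * (\<Sum>k<m. w ^ k) + 1 = (\<Sum>k<Suc m. w ^ k)"
  unfolding sum.lessThan_Suc_shift by (simp add: sum_distrib_left add.commute)

lemma sum_lessThan_pad:
  "M \<le> (L::nat) \<Longrightarrow> (\<Sum>n<L. f n * (if n < M then c n else (0::'a::semiring_0))) = (\<Sum>n<M. f n * c n)"
  by (rule trans[OF sum.mono_neutral_right[of "{..<L}" "{..<M}"]]) auto

locale positive_part =
  fixes cd :: "'i::finite \<Rightarrow> 'i \<Rightarrow> int"
    and E :: "'i \<Rightarrow> 'u::ring_1"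
    and sc :: "Qv \<Rightarrow> 'u \<Rightarrow> 'u"
    and fp :: "'i \<Rightarrow> 'u \<Rightarrow> 'u"
  assumes cartan: "cartan_datum cd"
    and module: "module sc"
    and alg_l: "\<And>a x y. sc a (x * y) = sc a x * y"
    and alg_r: "\<And>a x y. sc a (x * y) = x * sc a y"
    and fp_lin: "\<And>i. module_hom sc sc (fp i)"
    and fp_1: "\<And>i. fp i 1 = 0"
    and fp_EP: "\<And>i j P. fp i (E j * P) =
                 sc (vi cd i powi aij cd i j) (E j * fp i P) + (if i = j then P else 0)"
begin

sublocale M: module sc by (rule module)

abbreviation Ed :: "'i \<Rightarrow> nat \<Rightarrow> 'u" where
  "Ed i n \<equiv> Ediv cd E sc i n"

lemma fp_add: "fp i (x + y) = fp i x + fp i y" using module_hom.add[OF fp_lin] .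
lemma fp_scale: "fp i (sc a x) = sc a (fp i x)" using module_hom.scale[OF fp_lin] .
lemma fp_zero: "fp i 0 = 0" using module_hom.zero[OF fp_lin] .
lemma fp_diff: "fp i (x - y) = fp i x - fp i y" using module_hom.diff[OF fp_lin] .
lemma fp_sum: "fp i (sum g S) = (\<Sum>a\<in>S. fp i (g a))" using module_hom.sum[OF fp_lin] .

lemma weight_elem_negative: "weight_elem E sc \<mu> x \<Longrightarrow> \<mu> j < 0 \<Longrightarrow> x = 0"
  by (induction rule: weight_elem.induct) (auto simp: shift_apply split: if_splits)

lemma weight_elem_diff:
  "weight_elem E sc \<mu> x \<Longrightarrow> weight_elem E sc \<mu> y \<Longrightarrow> weight_elem E sc \<mu> (x - y)"
  using weight_elem.add[of E sc \<mu> x "sc (-1) y"] weight_elem.scale[of E sc \<mu> y "-1"]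
  by simp

lemma weight_elem_Ediv:
  "weight_elem E sc \<mu> x \<Longrightarrow> weight_elem E sc (shift \<mu> i (int k)) (Ed i k * x)"
  unfolding Ediv_def alg_l[symmetric] by (intro weight_elem.scale weight_elem_Epower)

lemma weight_elem_Ediv_sum:
  assumes "\<And>n. n < N \<Longrightarrow> weight_elem E sc (shift \<mu> i (- int (n + k))) (c n)"
  shows "weight_elem E sc \<mu> (\<Sum>n<N. Ed i (n + k) * c n)"
proof (rule weight_elem_sum)
  fix n assume "n < N"
  from weight_elem_Ediv[OF assms[OF this], where i = i and k = "n + k"]
  show "weight_elem E sc \<mu> (Ed i (n + k) * c n)" by simp
qed

lemma weight_elem_fp: "weight_elem E sc \<mu> x \<Longrightarrow> weight_elem E sc (shift \<mu> i (-1)) (fp i x)"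
proof (induction rule: weight_elem.induct)
  case (mulE \<mu> x j)
  have Efx: "weight_elem E sc (shift (shift \<mu> i (-1)) j 1) (E j * fp i x)"
    by (rule weight_elem.mulE[OF mulE.IH])
  show ?case
  proof (cases "i = j")
    case True
    then show ?thesis
      using Efx mulE.hyps fp_EP[of i j x] by (auto intro: weight_elem.intros)
  next
    case False
    have "shift (shift \<mu> i (-1)) j 1 = shift (shift \<mu> j 1) i (-1)"
      using False by (auto simp: shift_def fun_eq_iff)
    then show ?thesis
      using Efx False fp_EP[of i j x] by (auto intro: weight_elem.scale)
  qed
qed (auto simp: fp_zero fp_1 fp_add fp_scale intro: weight_elem.intros)

lemma fp_nilpotent: "weight_elem E sc \<mu> x \<Longrightarrow> (fp i ^^ (nat (\<mu> i) + 1)) x = 0"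
proof -
  assume x: "weight_elem E sc \<mu> x"
  have "weight_elem E sc (shift \<mu> i (- int k)) ((fp i ^^ k) x)" for k
  proof (induction k)
    case (Suc k)
    from weight_elem_fp[OF Suc.IH, of i] show ?case by (simp add: algebra_simps)
  qed (simp add: x)
  then show ?thesis
    by (rule weight_elem_negative[where j = i]) (simp add: shift_apply)
qed


section \<open>The Kashiwara decomposition inside a weight space\<close>

text \<open>q-integers: \<open>qsum i m = 1 + v_i^2 + ... + v_i^(2(m-1))\<close>, so that
  f_i'(E_i^m u) = qsum i m * E_i^(m-1) u for u in ker f_i'.  Dividing by the q-factorials,
  f_i'(E_i^(n+1) u) = lower_coeff i n * E_i^(n) u with a nonzero scalar lower_coeff i n.\<close>
definition qsum :: "'i \<Rightarrow> nat \<Rightarrow> Qv" where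
  "qsum i m = (\<Sum>k<m. (vi cd i ^ 2) ^ k)"

definition lower_coeff :: "'i \<Rightarrow> nat \<Rightarrow> Qv" where
  "lower_coeff i n = inverse (qfact cd i (Suc n)) * qsum i (Suc n) * qfact cd i n"

lemma vi_power: "vi cd i ^ m = vv ^ (nat (cd i i div 2) * m)"
  unfolding vi_def by (simp add: power_mult)

lemma vi_exponent_pos: "0 < nat (cd i i div 2)"
proof -
  have "cd i i > 0" "even (cd i i)" using cartan unfolding cartan_datum_def by auto
  then show ?thesis by (auto elim!: evenE)
qed

lemma vi_power_neq_1: "0 < m \<Longrightarrow> vi cd i ^ m \<noteq> 1"
  unfolding vi_power using vv_power_neq_1 vi_exponent_pos by simp

lemma vi_nonzero: "vi cd i \<noteq> 0"
  unfolding vi_def using vv_nonzero by simp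

lemma fp_Ei: "fp i (E i * P) = sc (vi cd i ^ 2) (E i * fp i P) + P"
proof -
  have "cd i i \<noteq> 0" using cartan unfolding cartan_datum_def by (metis less_irrefl)
  then have "aij cd i i = 2" unfolding aij_def by simp
  then show ?thesis using fp_EP[of i i P] by simp
qed

lemma qsum_nonzero: "0 < m \<Longrightarrow> qsum i m \<noteq> 0"
proof
  assume m: "0 < m" and "qsum i m = 0"
  then have "(vi cd i ^ 2) ^ m = 1"
    using power_diff_1_eq[of "vi cd i ^ 2" m] unfolding qsum_def by simp
  then show False using vi_power_neq_1[of "2 * m" i] m by (simp add: power_mult)
qed

lemma qint_nonzero: "0 < k \<Longrightarrow> qint cd i k \<noteq> 0"
proof -
  have ne: "vi cd i ^ n - inverse (vi cd i) ^ n \<noteq> 0" if "0 < n" for n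
  proof
    assume "vi cd i ^ n - inverse (vi cd i) ^ n = 0"
    then have "vi cd i ^ n * vi cd i ^ n = vi cd i ^ n * inverse (vi cd i ^ n)"
      by (simp add: power_inverse)
    then have "vi cd i ^ (2 * n) = 1" using vi_nonzero by (simp add: mult_2 power_add)
    then show False using vi_power_neq_1[of "2 * n" i] that by simp
  qed
  assume "0 < k"
  then show ?thesis unfolding qint_def using ne[of k] ne[of 1] by simp
qed

lemma qfact_nonzero: "qfact cd i n \<noteq> 0"
  unfolding qfact_def using qint_nonzero by simp

lemma lower_coeff_nonzero: "lower_coeff i n \<noteq> 0"
  unfolding lower_coeff_def using qfact_nonzero qsum_nonzero by simp

lemma Ediv_zero: "Ed i 0 * d = d"
  unfolding Ediv_def qfact_def using alg_l[of 1 1 d] by simp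

lemma fp_Epower_ker:
  "fp i d = 0 \<Longrightarrow> fp i (E i ^ Suc m * d) = sc (qsum i (Suc m)) (E i ^ m * d)"
proof (induction m)
  case 0 then show ?case using fp_Ei[of i d] by (simp add: qsum_def)
next
  case (Suc m)
  have "fp i (E i ^ Suc (Suc m) * d) = fp i (E i * (E i ^ Suc m * d))"
    by (simp add: mult.assoc)
  also have "\<dots> = sc (vi cd i ^ 2) (E i * sc (qsum i (Suc m)) (E i ^ m * d)) + E i ^ Suc m * d"
    using fp_Ei Suc by simp
  also have "\<dots> = sc (vi cd i ^ 2 * qsum i (Suc m) + 1) (E i ^ Suc m * d)"
    by (simp add: alg_r[symmetric] M.scale_left_distrib mult.assoc)
  also have "vi cd i ^ 2 * qsum i (Suc m) + 1 = qsum i (Suc (Suc m))"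
    unfolding qsum_def by (rule geometric_sum_step)
  finally show ?case .
qed

lemma fp_Ediv_ker:
  assumes "fp i d = 0" shows "fp i (Ed i (Suc n) * d) = sc (lower_coeff i n) (Ed i n * d)"
proof -
  have "fp i (Ed i (Suc n) * d) = sc (inverse (qfact cd i (Suc n)) * qsum i (Suc n)) (E i ^ n * d)"
    unfolding Ediv_def alg_l[symmetric] fp_scale fp_Epower_ker[OF assms] by simp
  also have "\<dots> = sc (lower_coeff i n) (Ed i n * d)"
    unfolding Ediv_def alg_l[symmetric] lower_coeff_def using qfact_nonzero[of i n]
    by (simp add: mult.assoc)
  finally show ?thesis .
qed

lemma fp_Ediv_sum:
  "(\<And>n. n < N \<Longrightarrow> fp i (c n) = 0) \<Longrightarrow>
   fp i (\<Sum>n<N. Ed i (Suc n) * c n) = (\<Sum>n<N. Ed i n * sc (lower_coeff i n) (c n))"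
  unfolding fp_sum by (intro sum.cong refl) (simp add: fp_Ediv_ker alg_r[symmetric])

text \<open>Uniqueness: if \<open>\<Sum>n<N. E_i^(n) c_n = 0\<close> with all c_n in ker f_i', then all c_n vanish.
  Apply f_i' to peel off c_0 and induct.\<close>
lemma decomposition_unique:
  "(\<And>n. n < N \<Longrightarrow> fp i (c n) = 0) \<Longrightarrow> (\<Sum>n<N. Ed i n * c n) = 0 \<Longrightarrow> n < N \<Longrightarrow> c n = 0"
proof (induction N arbitrary: c n)
  case (Suc N)
  let ?c' = "\<lambda>n. sc (lower_coeff i n) (c (Suc n))"
  have split: "(\<Sum>n<Suc N. Ed i n * c n) = c 0 + (\<Sum>n<N. Ed i (Suc n) * c (Suc n))"
    by (simp add: sum.lessThan_Suc_shift Ediv_zero del: sum.lessThan_Suc)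
  have ker: "fp i (c 0) = 0" "\<And>n. n < N \<Longrightarrow> fp i (c (Suc n)) = 0" using Suc.prems(1) by auto
  have "(\<Sum>n<N. Ed i n * ?c' n) = fp i (\<Sum>n<Suc N. Ed i n * c n)"
    unfolding split fp_add ker(1) using fp_Ediv_sum[OF ker(2)] by simp
  then have sum0: "(\<Sum>n<N. Ed i n * ?c' n) = 0" using Suc.prems(2) fp_zero by simp
  have ker': "fp i (?c' n) = 0" if "n < N" for n using ker(2)[OF that] by (simp add: fp_scale)
  have c'0: "?c' n = 0" if "n < N" for n using Suc.IH[OF ker' sum0 that] .
  then have tail: "c (Suc n) = 0" if "n < N" for n
    using arg_cong[of _ _ "sc (inverse (lower_coeff i n))", OF c'0[OF that]]
    by (simp add: lower_coeff_nonzero)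
  then have "c 0 = 0" using Suc.prems(2) split by simp
  with tail show ?case using Suc.prems(3) by (cases n) auto
qed simp

lemma fp_lift_decomposition:
  "(\<And>n. n < N \<Longrightarrow> fp i (d n) = 0) \<Longrightarrow>
   fp i (\<Sum>n<N. Ed i (Suc n) * sc (inverse (lower_coeff i n)) (d n)) = (\<Sum>n<N. Ed i n * d n)"
  by (subst fp_Ediv_sum) (simp_all add: fp_scale lower_coeff_nonzero)

text \<open>Induct on the nilpotency order: decompose f_i' u,
  lift the decomposition, and put the difference (which lies in ker f_i') into c_0.\<close>
lemma decomposition_exists:
  "weight_elem E sc \<mu> u \<Longrightarrow> (fp i ^^ k) u = 0 \<Longrightarrow>
   \<exists>N c. (\<forall>n<N. fp i (c n) = 0 \<and> weight_elem E sc (shift \<mu> i (- int n)) (c n))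
      \<and> u = (\<Sum>n<N. Ed i n * c n)"
proof (induction k arbitrary: \<mu> u)
  case 0 then show ?case by (intro exI[of _ 0]) simp
next
  case (Suc k)
  have "weight_elem E sc (shift \<mu> i (-1)) (fp i u)" "(fp i ^^ k) (fp i u) = 0"
    using weight_elem_fp[OF Suc.prems(1)] Suc.prems(2)
    by (simp_all add: funpow_Suc_right del: funpow.simps)
  then obtain N d where d: "\<forall>n<N. fp i (d n) = 0 \<and> weight_elem E sc (shift \<mu> i (- 1 - int n)) (d n)"
    and fu: "fp i u = (\<Sum>n<N. Ed i n * d n)" using Suc.IH by fastforce
  define c where "c n = sc (inverse (lower_coeff i n)) (d n)" for n
  define g where "g = (\<Sum>n<N. Ed i (Suc n) * c n)"
  have c: "fp i (c n) = 0 \<and> weight_elem E sc (shift \<mu> i (- int (Suc n))) (c n)" if "n < N" for n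
    using d that by (auto simp: c_def fp_scale algebra_simps intro: weight_elem.scale)
  have "fp i g = fp i u" unfolding g_def c_def fu using d by (intro fp_lift_decomposition) auto
  then have ker0: "fp i (u - g) = 0" by (simp add: fp_diff)
  have "weight_elem E sc \<mu> g"
    unfolding g_def using weight_elem_Ediv_sum[where k = 1 and c = c and N = N] c by simp
  then have wt0: "weight_elem E sc \<mu> (u - g)" by (rule weight_elem_diff[OF Suc.prems(1)])
  define c' where "c' n = (if n = 0 then u - g else c (n - 1))" for n
  have "\<forall>n<Suc N. fp i (c' n) = 0 \<and> weight_elem E sc (shift \<mu> i (- int n)) (c' n)"
    using c ker0 wt0 by (auto simp: c'_def less_Suc_eq_0_disj)
  moreover have "u = (\<Sum>n<Suc N. Ed i n * c' n)"
    by (simp add: sum.lessThan_Suc_shift Ediv_zero c'_def g_def del: sum.lessThan_Suc)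
  ultimately show ?case by blast
qed

text \<open>By uniqueness of the decomposition, E~_i is given by the explicit formula on any
  decomposition \<open>u = \<Sum>n. E_i^(n) c_n\<close> (after padding two decompositions to equal length).\<close>
lemma kashE_eq:
  assumes c: "\<forall>n<M. fp i (c n) = 0" and u: "u = (\<Sum>n<M. Ed i n * c n)"
  shows "kashE cd E sc fp i u = (\<Sum>n<M. Ed i (Suc n) * c n)"
  unfolding kashE_def
proof (rule the_equality)
  show "\<exists>N c'. (\<forall>n<N. fp i (c' n) = 0) \<and> u = (\<Sum>n<N. Ed i n * c' n) \<and>
      (\<Sum>n<M. Ed i (Suc n) * c n) = (\<Sum>n<N. Ed i (Suc n) * c' n)"
    using c u by blast
next
  fix w assume "\<exists>N c'. (\<forall>n<N. fp i (c' n) = 0) \<and> u = (\<Sum>n<N. Ed i n * c' n)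
      \<and> w = (\<Sum>n<N. Ed i (Suc n) * c' n)"
  then obtain N c' where c': "\<forall>n<N. fp i (c' n) = 0" and u': "u = (\<Sum>n<N. Ed i n * c' n)"
    and w: "w = (\<Sum>n<N. Ed i (Suc n) * c' n)" by blast
  define L where "L = max M N"
  define d where "d n = (if n < M then c n else 0)" for n
  define d' where "d' n = (if n < N then c' n else 0)" for n
  have M_le_L: "M \<le> L" and N_le_L: "N \<le> L" by (auto simp: L_def)
  have "(\<Sum>n<L. Ed i n * (d n - d' n)) = 0"
    using u u' unfolding right_diff_distrib sum_subtractf d_def d'_def
      sum_lessThan_pad[OF M_le_L] sum_lessThan_pad[OF N_le_L] by simp
  moreover have "fp i (d n - d' n) = 0" if "n < L" for n
    using c c' by (simp add: d_def d'_def fp_diff fp_zero)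
  ultimately have "d n = d' n" if "n < L" for n
    using decomposition_unique[of L i "\<lambda>n. d n - d' n" n] that by auto
  then have "(\<Sum>n<L. Ed i (Suc n) * d' n) = (\<Sum>n<L. Ed i (Suc n) * d n)"
    by (intro sum.cong) auto
  then show "w = (\<Sum>n<M. Ed i (Suc n) * c n)"
    unfolding w d_def d'_def sum_lessThan_pad[OF M_le_L] sum_lessThan_pad[OF N_le_L] .
qed

lemma weight_elem_kashE:
  assumes u: "weight_elem E sc \<mu> u"
  shows "weight_elem E sc (shift \<mu> i 1) (kashE cd E sc fp i u)"
proof -
  obtain M c where c: "\<forall>n<M. fp i (c n) = 0 \<and> weight_elem E sc (shift \<mu> i (- int n)) (c n)"
    and ue: "u = (\<Sum>n<M. Ed i n * c n)"
    using decomposition_exists[OF u fp_nilpotent[OF u]] by blast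
  have "kashE cd E sc fp i u = (\<Sum>n<M. Ed i (Suc n) * c n)"
    using c ue by (intro kashE_eq) auto
  moreover have "weight_elem E sc (shift \<mu> i 1) (\<Sum>n<M. Ed i (n + 1) * c n)"
    using c by (intro weight_elem_Ediv_sum) (simp add: algebra_simps)
  ultimately show ?thesis by simp
qed

lemma kmon_weight: "m \<in> kmon cd E sc fp \<Longrightarrow> \<exists>\<mu>. (\<forall>j. 0 \<le> \<mu> j) \<and> weight_elem E sc \<mu> m"
proof (induction rule: kmon.induct)
  case one show ?case using weight_elem.one by fastforce
next
  case (step m i)
  then obtain \<mu> where "\<forall>j. 0 \<le> \<mu> j" "weight_elem E sc \<mu> m" by blast
  then have "\<forall>j. 0 \<le> shift \<mu> i 1 j" "weight_elem E sc (shift \<mu> i 1) (kashE cd E sc fp i m)"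
    by (simp_all add: shift_apply weight_elem_kashE)
  then show ?case by blast
qed

end


section \<open>Comparison of the two forms on weight spaces\<close>

lemma sym_bilin_add: "sym_bilin sc B \<Longrightarrow> B (x + y) z = B x z + B y z"
  unfolding sym_bilin_def by blast

lemma sym_bilin_scale: "sym_bilin sc B \<Longrightarrow> B (sc a x) z = a * B x z"
  unfolding sym_bilin_def by blast

lemma sym_bilin_sym: "sym_bilin sc B \<Longrightarrow> B x y = B y x"
  unfolding sym_bilin_def by blast

lemma sym_bilin_zero: "sym_bilin sc B \<Longrightarrow> B 0 z = 0"
  using sym_bilin_add[of sc B 0 0 z] by simp

lemma sym_bilin_diff: "sym_bilin sc B \<Longrightarrow> B (x - y) z = B x z - B y z"
  using sym_bilin_add[of sc B "x - y" y z] by simp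

locale form_pair = positive_part cd E sc fp
  for cd :: "'i::finite \<Rightarrow> 'i \<Rightarrow> int" and E :: "'i \<Rightarrow> 'u::ring_1"
    and sc :: "Qv \<Rightarrow> 'u \<Rightarrow> 'u" and fp :: "'i \<Rightarrow> 'u \<Rightarrow> 'u" +
  fixes K R :: "'u \<Rightarrow> 'u \<Rightarrow> Qv"
  assumes generated: "gen_by E sc = UNIV"
    and K_bilin: "sym_bilin sc K"
    and K_11: "K 1 1 = 1"
    and K_E: "\<And>i x y. K (E i * x) y = K x (fp i y)"
    and R_bilin: "sym_bilin sc R"
    and R_11: "R 1 1 = 1"
    and R_E: "\<And>i x y. R (E i * x) y = inverse (1 - inverse (vi cd i ^ 2)) * R x (fp i y)"
begin

definition ringel_ratio :: "'i \<Rightarrow> Qv" where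
  "ringel_ratio i = inverse (1 - inverse (vi cd i ^ 2))"

text \<open>c_\<mu> = \<Prod>_i c_i^(\<mu>_i), the ratio R/K on the weight space U^+_\<mu>.\<close>
definition weight_factor :: "('i \<Rightarrow> int) \<Rightarrow> Qv" where
  "weight_factor \<mu> = (\<Prod>j\<in>UNIV. ringel_ratio j ^ nat (\<mu> j))"

lemma weight_factor_shift:
  assumes "0 \<le> \<mu> i" shows "weight_factor (shift \<mu> i 1) = ringel_ratio i * weight_factor \<mu>"
proof -
  have split: "weight_factor \<nu> = ringel_ratio i ^ nat (\<nu> i) * (\<Prod>j\<in>UNIV - {i}. ringel_ratio j ^ nat (\<nu> j))"
    for \<nu> unfolding weight_factor_def by (rule prod.remove) auto
  have "(\<Prod>j\<in>UNIV - {i}. ringel_ratio j ^ nat (shift \<mu> i 1 j)) = (\<Prod>j\<in>UNIV - {i}. ringel_ratio j ^ nat (\<mu> j))"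
    by (intro prod.cong) (auto simp: shift_apply)
  moreover have "nat (shift \<mu> i 1 i) = Suc (nat (\<mu> i))" using assms by (simp add: shift_apply)
  ultimately show ?thesis unfolding split[of "shift \<mu> i 1"] split[of \<mu>] by simp
qed

text \<open>The two forms agree when one argument is 1: both vanish on E_i x by f_i'(1) = 0.\<close>
lemma R_one_eq_K_one: "R 1 y = K 1 y"
proof -
  have "y \<in> gen_by E sc" using generated by simp
  then show ?thesis
  proof induction
    case one then show ?case using R_11 K_11 by simp
  next
    case (mulE x i)
    have "R (E i * x) 1 = 0" "K (E i * x) 1 = 0"
      using R_E K_E fp_1 sym_bilin_zero[OF R_bilin] sym_bilin_zero[OF K_bilin]
        sym_bilin_sym[OF R_bilin] sym_bilin_sym[OF K_bilin] by metis+
    then show ?case using sym_bilin_sym[OF R_bilin] sym_bilin_sym[OF K_bilin] by metis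
  next
    case (add x y) then show ?case
      using sym_bilin_sym[OF R_bilin, of 1] sym_bilin_sym[OF K_bilin, of 1]
        sym_bilin_add[OF R_bilin] sym_bilin_add[OF K_bilin] by metis
  next
    case (scale x a) then show ?case
      using sym_bilin_sym[OF R_bilin, of 1] sym_bilin_sym[OF K_bilin, of 1]
        sym_bilin_scale[OF R_bilin] sym_bilin_scale[OF K_bilin] by metis
  qed
qed

lemma R_eq_weight_factor_K: "weight_elem E sc \<mu> x \<Longrightarrow> R x y = weight_factor \<mu> * K x y"
proof (induction arbitrary: y rule: weight_elem.induct)
  case (zero \<mu>) then show ?case using sym_bilin_zero[OF R_bilin] sym_bilin_zero[OF K_bilin] by simp
next
  case one then show ?case using R_one_eq_K_one by (simp add: weight_factor_def)
next
  case (mulE \<mu> x i)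
  show ?case
  proof (cases "0 \<le> \<mu> i")
    case True
    have "R (E i * x) y = ringel_ratio i * (weight_factor \<mu> * K x (fp i y))"
      using R_E mulE.IH unfolding ringel_ratio_def by simp
    also have "\<dots> = weight_factor (shift \<mu> i 1) * K (E i * x) y"
      using K_E weight_factor_shift[of \<mu> i, OF True] by simp
    finally show ?thesis .
  next
    case False
    then have "x = 0" using weight_elem_negative[OF mulE.hyps, of i] by simp
    then show ?thesis using sym_bilin_zero[OF R_bilin] sym_bilin_zero[OF K_bilin] by simp
  qed
next
  case (add \<mu> x x') then show ?case
    using sym_bilin_add[OF R_bilin] sym_bilin_add[OF K_bilin] by (simp add: distrib_left)
next
  case (scale \<mu> x a) then show ?case
    using sym_bilin_scale[OF R_bilin] sym_bilin_scale[OF K_bilin] by simp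
qed

text \<open>c_i = 1 + 1/(v_i^2 - 1) is congruent to 1 modulo v^-1 A, hence so is every c_\<mu>.\<close>
lemma ringel_ratio_congruent: "ringel_ratio i - 1 \<in> vinvA"
proof -
  have "vi cd i ^ 2 \<noteq> 1" "vi cd i ^ 2 \<noteq> 0" using vi_power_neq_1[of 2 i] vi_nonzero by simp_all
  then have "ringel_ratio i - 1 = inverse (vi cd i ^ 2 - 1)"
    unfolding ringel_ratio_def by (simp add: field_simps)
  moreover have "0 < nat (cd i i div 2) * 2" using vi_exponent_pos by simp
  ultimately show ?thesis
    using inverse_vv_power_minus_1 vi_power[of i 2] by simp
qed

lemma weight_factor_congruent: "weight_factor \<mu> - 1 \<in> vinvA"
  unfolding weight_factor_def
  by (intro one_vinvA_prod one_vinvA_power ringel_ratio_congruent) simp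

end


section \<open>The forms on L(\<infinity>)\<close>

context form_pair
begin

text \<open>If K is A-valued on L(\<infinity>), then R \<equiv> K modulo v^-1 A on L(\<infinity>): by A-linearity it
  suffices to treat x = a m with m a Kashiwara monomial, which is homogeneous.\<close>
lemma R_congruent_K:
  assumes K_A: "\<And>x y. x \<in> Linf cd E sc fp \<Longrightarrow> y \<in> Linf cd E sc fp \<Longrightarrow> K x y \<in> Aring"
    and x: "x \<in> Linf cd E sc fp" and y: "y \<in> Linf cd E sc fp"
  shows "R x y - K x y \<in> vinvA"
  using x
proof induction
  case zero then show ?case
    using sym_bilin_zero[OF R_bilin] sym_bilin_zero[OF K_bilin] vinvA_zero by simp
next
  case (add x1 x2)
  have "R (x1 + x2) y - K (x1 + x2) y = (R x1 y - K x1 y) + (R x2 y - K x2 y)"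
    using sym_bilin_add[OF R_bilin] sym_bilin_add[OF K_bilin] by simp
  then show ?case using add vinvA_add by simp
next
  case (smul a m)
  obtain \<mu> where "weight_elem E sc \<mu> m" using kmon_weight[OF smul.hyps(2)] by blast
  then have R_m: "R m y = weight_factor \<mu> * K m y" by (rule R_eq_weight_factor_K)
  have "m \<in> Linf cd E sc fp" using Linf.smul[OF Aring_one smul.hyps(2)] by simp
  then have "a * K m y \<in> Aring" using Aring_mult[OF smul.hyps(1) K_A] y by blast
  then have "(weight_factor \<mu> - 1) * (a * K m y) \<in> vinvA"
    using vinvA_mult_Aring weight_factor_congruent by blast
  moreover have "R (sc a m) y - K (sc a m) y = (weight_factor \<mu> - 1) * (a * K m y)"
    using sym_bilin_scale[OF R_bilin] sym_bilin_scale[OF K_bilin] R_m by (simp add: algebra_simps)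
  ultimately show ?case by simp
qed

lemma R_in_Aring:
  assumes K_A: "\<And>x y. x \<in> Linf cd E sc fp \<Longrightarrow> y \<in> Linf cd E sc fp \<Longrightarrow> K x y \<in> Aring"
    and x: "x \<in> Linf cd E sc fp" and y: "y \<in> Linf cd E sc fp"
  shows "R x y \<in> Aring"
proof -
  have "R x y - K x y \<in> Aring" "K x y \<in> Aring"
    using R_congruent_K[OF K_A x y] vinvA_subset_Aring K_A[OF x y] by blast+
  then show ?thesis using Aring_add by fastforce
qed

lemma R_well_defined:
  assumes R_A: "\<And>x y. x \<in> Linf cd E sc fp \<Longrightarrow> y \<in> Linf cd E sc fp \<Longrightarrow> R x y \<in> Aring"
    and x': "x' \<in> Linf cd E sc fp" and y: "y \<in> Linf cd E sc fp"
    and dx: "x - x' \<in> vinvL cd E sc fp" and dy: "y - y' \<in> vinvL cd E sc fp"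
  shows "R x y - R x' y' \<in> vinvA"
proof -
  obtain z where z: "z \<in> Linf cd E sc fp" "x - x' = sc (inverse vv) z"
    using dx unfolding vinvL_def by blast
  obtain z' where z': "z' \<in> Linf cd E sc fp" "y - y' = sc (inverse vv) z'"
    using dy unfolding vinvL_def by blast
  have "R x' y - R x' y' = R (y - y') x'"
    using sym_bilin_diff[OF R_bilin] sym_bilin_sym[OF R_bilin] by metis
  then have "R x y - R x' y' = R (x - x') y + R (y - y') x'"
    using sym_bilin_diff[OF R_bilin, of x x' y] by (simp add: algebra_simps)
  also have "\<dots> = inverse vv * R z y + inverse vv * R z' x'"
    unfolding z(2) z'(2) using sym_bilin_scale[OF R_bilin] by simp
  finally show ?thesis
    using inverse_vv_mult_Aring R_A z(1) z'(1) x' y vinvA_add by simp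
qed

end

theorem proposition8p4:
  fixes cd :: "'i::finite \<Rightarrow> 'i \<Rightarrow> int"
    and E :: "'i \<Rightarrow> 'u::ring_1"
    and sc :: "Qv \<Rightarrow> 'u \<Rightarrow> 'u"
    and fp :: "'i \<Rightarrow> 'u \<Rightarrow> 'u"
    and K R :: "'u \<Rightarrow> 'u \<Rightarrow> Qv"
  assumes cartan: "cartan_datum cd"
    and module: "module sc"
    and alg_l: "\<And>a x y. sc a (x * y) = sc a x * y"
    and alg_r: "\<And>a x y. sc a (x * y) = x * sc a y"
    and generated: "gen_by E sc = UNIV"
    and fp_lin: "\<And>i. module_hom sc sc (fp i)"
    and fp_1: "\<And>i. fp i 1 = 0"
    and fp_E: "\<And>i j. fp i (E j) = (if i = j then 1 else 0)"
    and fp_EP: "\<And>i j P. fp i (E j * P) =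
                 sc (vi cd i powi aij cd i j) (E j * fp i P) + (if i = j then P else 0)"
    and K_bilin: "sym_bilin sc K"
    and K_nondeg: "\<And>x. (\<forall>y. K x y = 0) \<Longrightarrow> x = 0"
    and K_11: "K 1 1 = 1"
    and K_E: "\<And>i x y. K (E i * x) y = K x (fp i y)"
    and K_L: "\<And>x y. x \<in> Linf cd E sc fp \<Longrightarrow> y \<in> Linf cd E sc fp \<Longrightarrow> K x y \<in> Aring"
    and R_bilin: "sym_bilin sc R"
    and R_11: "R 1 1 = 1"
    and R_E: "\<And>i x y. R (E i * x) y = inverse (1 - inverse (vi cd i ^ 2)) * R x (fp i y)"
  shows "(\<forall>x\<in>Linf cd E sc fp. \<forall>y\<in>Linf cd E sc fp. R x y \<in> Aring)
       \<and> (\<forall>x\<in>Linf cd E sc fp. \<forall>x'\<in>Linf cd E sc fp. \<forall>y\<in>Linf cd E sc fp. \<forall>y'\<in>Linf cd E sc fp.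
            x - x' \<in> vinvL cd E sc fp \<longrightarrow> y - y' \<in> vinvL cd E sc fp \<longrightarrow> R x y - R x' y' \<in> vinvA)
       \<and> (\<forall>x\<in>Linf cd E sc fp. \<forall>y\<in>Linf cd E sc fp. R x y - K x y \<in> vinvA)"
proof -
  interpret form_pair cd E sc fp K R
    using cartan module alg_l alg_r fp_lin fp_1 fp_EP generated K_bilin K_11 K_E R_bilin R_11 R_E
    by (simp add: form_pair_def positive_part_def form_pair_axioms_def)
  have R_A: "R x y \<in> Aring" if "x \<in> Linf cd E sc fp" "y \<in> Linf cd E sc fp" for x y
    using R_in_Aring[OF K_L that] .
  show ?thesis
    using R_A R_well_defined[OF R_A] R_congruent_K[OF K_L] by blast
qed

end
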